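(* Under Assumptions 1, 2, 4 and 5, the gradient descent iterates satisfy: (i) $\max_{1\le k\le L}\|W_k(t)\|_F$ is unbounded in $t$; (ii) $\sum_{t=0}^\infty\eta_t=\infty$; (iii) for every $R>0$, $\sum_{t:\,W(t)\in B(R)}\eta_t<\infty$.
   Context: Setting: data $(x_i,y_i)_{i=1}^n$ with $x_i\in\mathbb{R}^d$, $\|x_i\|\le 1$, $y_i\in\{-1,+1\}$; $z_i:=y_ix_i$; the data are linearly separable. A depth-$L$ linear network is $W=(W_L,\dots,W_1)$ with $W_k\in\mathbb{R}^{d_k\times d_{k-1}}$, $d_0=d$, $d_L=1$, $w_{\mathrm{prod}}:=(W_L\cdots W_1)^\top$, and $\mathcal{R}(W)=\frac1n\sum_{i=1}^n\ell(\langle w_{\mathrm{prod}},z_i\rangle)$. $B(R):=\{W:\max_k\|W_k\|_F\le R\}$. Gradient descent: $W(t+1)=W(t)-\eta_t\nabla\mathcal{R}(W(t))$, $t=0,1,2,\dots$. Assumption 1: $\ell$ is continuously differentiable, $\ell'<0$ everywhere, $\lim_{x\to-\infty}\ell(x)=\infty$, $\lim_{x\to\infty}\ell(x)=0$. Assumption 2: $\nabla\mathcal{R}(W(0))\ne0$ and $\mathcal{R}(W(0))\le\ell(0)$. Assumption 4: $\ell'$ is $\beta$-Lipschitz and $|\ell'|\le G$. Let $\beta(R):=2L^2R^{2L-2}(\beta+G)$. Assumption 5: $\eta_t=\min\{1/\beta(R_t),1\}$, where the radii $R_t$ satisfy $W(t)\in B(R_t-1)$ for every $t$, and $R_{t+1}=R_t$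 whenever $W(t+1)\in B(R_t-1)$. *)

theory Defs
  imports "HOL-Analysis.Analysis"
begin

text \<open>Parameters of a depth-L linear network are represented as
  W :: nat => nat => nat => real, where W k i j is entry (i,j) of layer k
  (1 <= k <= L, i < dims k, j < dims (k-1)).  Data: x i j is coordinate j of
  sample x_i (i < n, j < dims 0), y i its label.\<close>

type_synonym params = "nat \<Rightarrow> nat \<Rightarrow> nat \<Rightarrow> real"

fun prodW :: "(nat \<Rightarrow> nat) \<Rightarrow> params \<Rightarrow> nat \<Rightarrow> nat \<Rightarrow> nat \<Rightarrow> real" where
  "prodW dims W 0 = (\<lambda>i j. if i = j then 1 else 0)"
| "prodW dims W (Suc k) = (\<lambda>i j. \<Sum>m<dims k. W (Suc k) i m * prodW dims W k m j)"

text \<open>w_prod = (W_L ... W_1)^T, a vector in R^(dims 0).\<close>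
definition wprod :: "(nat \<Rightarrow> nat) \<Rightarrow> nat \<Rightarrow> params \<Rightarrow> nat \<Rightarrow> real" where
  "wprod dims L W j = prodW dims W L 0 j"

definition risk :: "(real \<Rightarrow> real) \<Rightarrow> nat \<Rightarrow> (nat \<Rightarrow> nat \<Rightarrow> real) \<Rightarrow> (nat \<Rightarrow> real)
    \<Rightarrow> (nat \<Rightarrow> nat) \<Rightarrow> nat \<Rightarrow> params \<Rightarrow> real" where
  "risk loss n x y dims L W =
     (1 / real n) * (\<Sum>i<n. loss (\<Sum>j<dims 0. wprod dims L W j * (y i * x i j)))"

definition perturb :: "params \<Rightarrow> nat \<Rightarrow> nat \<Rightarrow> nat \<Rightarrow> real \<Rightarrow> params" where
  "perturb W k i j s = (\<lambda>k' i' j'. if k' = k \<and> i' = i \<and> j' = j then W k i j + s else W k' i' j')"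

definition gradP :: "(params \<Rightarrow> real) \<Rightarrow> params \<Rightarrow> params" where
  "gradP F W = (\<lambda>k i j. deriv (\<lambda>s. F (perturb W k i j s)) 0)"

definition frob :: "(nat \<Rightarrow> nat) \<Rightarrow> params \<Rightarrow> nat \<Rightarrow> real" where
  "frob dims W k = sqrt (\<Sum>i<dims k. \<Sum>j<dims (k - 1). (W k i j)\<^sup>2)"

definition maxfrob :: "(nat \<Rightarrow> nat) \<Rightarrow> nat \<Rightarrow> params \<Rightarrow> real" where
  "maxfrob dims L W = Max ((\<lambda>k. frob dims W k) ` {1..L})"

definition inBall :: "(nat \<Rightarrow> nat) \<Rightarrow> nat \<Rightarrow> params \<Rightarrow> real \<Rightarrow> bool" where
  "inBall dims L W R \<longleftrightarrow> (\<forall>k\<in>{1..L}. frob dims W k \<le> R)"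

definition betaR :: "nat \<Rightarrow> real \<Rightarrow> real \<Rightarrow> real \<Rightarrow> real" where
  "betaR L b G R = 2 * real L ^ 2 * R ^ (2 * L - 2) * (b + G)"

end

theory Submission
  imports Defs
begin

text \<open>
  Inside the ball \<open>B(R)\<close> the risk is smooth with constant \<open>\<beta>(R)\<close>, so a step with
  \<open>\<eta>\<^sub>t \<le> 1/\<beta>(R\<^sub>t)\<close> lowers it by at least \<open>\<eta>\<^sub>t/2 \<cdot> |\<nabla>R(W(t))|\<^sup>2\<close>; as the risk is
  nonnegative, \<open>\<Sum>\<^sub>t \<eta>\<^sub>t |\<nabla>R(W(t))|\<^sup>2 < \<infinity>\<close>.
  From \<open>t = 1\<close> on the risk is below \<open>\<ell>(0)\<close>, so some sample keeps an output of at least a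
  fixed \<open>\<delta> > 0\<close>. Moving the first layer along \<open>c u\<^sup>T\<close>, with \<open>c = W\<^sub>L \<cdots> W\<^sub>2\<close> and \<open>u\<close> a
  separating direction, then bounds \<open>|\<nabla>R|\<^sup>2\<close> from below on every ball \<open>B(r)\<close>, which gives (iii).
  If the weights were bounded, the radii \<open>R\<^sub>t\<close> would eventually stop changing, the step sizes
  would stay away from 0, and (iii) for a ball containing all iterates would fail: this is (i).
  Finally \<open>|W\<^sub>k(t)| \<le> |W\<^sub>k(0)| + \<Sum>\<^sub>s\<^sub><\<^sub>t \<eta>\<^sub>s |\<nabla>R(W(s))|\<close> and
  \<open>\<eta> |\<nabla>R| \<le> (\<eta> + \<eta> |\<nabla>R|\<^sup>2)/2\<close>, so \<open>\<Sum>\<^sub>t \<eta>\<^sub>t < \<infinity>\<close> would bound the weights,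
  contradicting (i); this is (ii).
\<close>

section \<open>Forward pass of a linear network, its directional derivatives, and the risk\<close>

definition param_shift :: "params \<Rightarrow> real \<Rightarrow> params \<Rightarrow> params" where
  "param_shift W s D = (\<lambda>k i j. W k i j + s * D k i j)"

lemma param_shift_0 [simp]: "param_shift W 0 D = W"
  by (simp add: param_shift_def)

fun forward :: "(nat \<Rightarrow> nat) \<Rightarrow> params \<Rightarrow> (nat \<Rightarrow> real) \<Rightarrow> nat \<Rightarrow> nat \<Rightarrow> real" where
  "forward dims W z 0 = z"
| "forward dims W z (Suc k) = (\<lambda>i. \<Sum>m<dims k. W (Suc k) i m * forward dims W z k m)"

fun forward_dir :: "(nat \<Rightarrow> nat) \<Rightarrow> params \<Rightarrow> params \<Rightarrow> (nat \<Rightarrow> real) \<Rightarrow> nat \<Rightarrow> nat \<Rightarrow> real" where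
  "forward_dir dims W D z 0 = (\<lambda>i. 0)"
| "forward_dir dims W D z (Suc k) =
     (\<lambda>i. \<Sum>m<dims k. D (Suc k) i m * forward dims W z k m + W (Suc k) i m * forward_dir dims W D z k m)"

fun forward_dir2 :: "(nat \<Rightarrow> nat) \<Rightarrow> params \<Rightarrow> params \<Rightarrow> (nat \<Rightarrow> real) \<Rightarrow> nat \<Rightarrow> nat \<Rightarrow> real" where
  "forward_dir2 dims W D z 0 = (\<lambda>i. 0)"
| "forward_dir2 dims W D z (Suc k) =
     (\<lambda>i. \<Sum>m<dims k. 2 * D (Suc k) i m * forward_dir dims W D z k m + W (Suc k) i m * forward_dir2 dims W D z k m)"

lemma forward_has_derivative:
  "((\<lambda>s. forward dims (param_shift W s D) z k i) has_real_derivative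
      forward_dir dims (param_shift W s D) D z k i) (at s)"
proof (induction k arbitrary: i)
  case (Suc k)
  show ?case unfolding forward.simps forward_dir.simps param_shift_def
    by (rule DERIV_sum) (rule derivative_eq_intros Suc[unfolded param_shift_def] | simp)+
qed simp

lemma forward_dir_has_derivative:
  "((\<lambda>s. forward_dir dims (param_shift W s D) D z k i) has_real_derivative
      forward_dir2 dims (param_shift W s D) D z k i) (at s)"
proof (induction k arbitrary: i)
  case (Suc k)
  show ?case unfolding forward_dir.simps forward_dir2.simps param_shift_def
    by (rule DERIV_sum)
      (rule derivative_eq_intros Suc[unfolded param_shift_def]
         forward_has_derivative[unfolded param_shift_def] | simp)+
qed simp

lemma prodW_forward:
  "i < dims k \<Longrightarrow> (\<Sum>j<dims 0. prodW dims W k i j * z j) = forward dims W z k i"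
proof (induction k arbitrary: i)
  case 0
  have "(if i = j then 1 else 0) * z j = (if i = j then z i else 0)" for j :: nat
    by simp
  then show ?case using 0 by simp
next
  case (Suc k)
  have "(\<Sum>j<dims 0. prodW dims W (Suc k) i j * z j)
      = (\<Sum>m<dims k. W (Suc k) i m * (\<Sum>j<dims 0. prodW dims W k m j * z j))"
    by (simp add: sum_distrib_left sum_distrib_right mult.assoc sum.swap[of _ "{..<dims 0}"])
  also have "\<dots> = forward dims W z (Suc k) i"
    using Suc.IH by simp
  finally show ?case .
qed

definition unit_vec :: "nat \<Rightarrow> nat \<Rightarrow> real" where
  "unit_vec m = (\<lambda>i. if i = m then 1 else 0)"

lemma forward_linear:
  assumes "i < dims k"
  shows "forward dims W v k i = (\<Sum>m<dims 0. v m * forward dims W (unit_vec m) k i)"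
proof -
  have "prodW dims W k i m = forward dims W (unit_vec m) k i" if "m < dims 0" for m
    using prodW_forward[where dims=dims and k=k and W=W and z="unit_vec m", OF assms] that
    by (simp add: unit_vec_def if_distrib[of "(*) _"] cong: if_cong)
  then show ?thesis
    using prodW_forward[where dims=dims and k=k and W=W and z=v, OF assms] by (simp add: mult.commute)
qed

lemma forward_Suc_eq_shifted:
  "forward dims W z (Suc k) = forward (\<lambda>k. dims (Suc k)) (\<lambda>k. W (Suc k)) (forward dims W z 1) k"
  by (induction k) simp_all

lemma forward_dir_Suc_eq_shifted:
  assumes "\<And>k i j. 2 \<le> k \<Longrightarrow> D k i j = 0"
  shows "forward_dir dims W D z (Suc k)
       = forward (\<lambda>k. dims (Suc k)) (\<lambda>k. W (Suc k)) (forward_dir dims W D z 1) k"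
  by (induction k) (simp_all add: assms)

definition unit_param :: "nat \<Rightarrow> nat \<Rightarrow> nat \<Rightarrow> params" where
  "unit_param k i j = (\<lambda>k' i' j'. if k' = k \<and> i' = i \<and> j' = j then 1 else 0)"

lemma perturb_eq_param_shift: "perturb W k i j s = param_shift W s (unit_param k i j)"
  by (auto simp: perturb_def param_shift_def unit_param_def fun_eq_iff)

lemma forward_dir_eq_0:
  "(\<And>k' i j. k' \<le> K \<Longrightarrow> D k' i j = 0) \<Longrightarrow> forward_dir dims W D z K m = 0"
proof (induction K arbitrary: m)
  case (Suc K)
  have "forward_dir dims W D z K m' = 0" for m'
    using Suc by auto
  then show ?case
    using Suc.prems by simp
qed simp

lemma forward_dir_unit_param_top:
  assumes "j < dims K"
  shows "forward_dir dims W (unit_param (Suc K) i' j) z (Suc K) i = (if i' = i then forward dims W z K j else 0)"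
proof -
  have "forward_dir dims W (unit_param (Suc K) i' j) z K m = 0" for m
    by (rule forward_dir_eq_0) (auto simp: unit_param_def)
  then have "forward_dir dims W (unit_param (Suc K) i' j) z (Suc K) i
      = (\<Sum>m<dims K. (if m = j then (if i' = i then forward dims W z K j else 0) else 0))"
    unfolding forward_dir.simps by (intro sum.cong) (auto simp: unit_param_def)
  then show ?thesis
    using assms by simp
qed

lemma forward_dir_unit_param_lower:
  "k \<le> K \<Longrightarrow> forward_dir dims W (unit_param k i' j) z (Suc K) i
     = (\<Sum>m<dims K. W (Suc K) i m * forward_dir dims W (unit_param k i' j) z K m)"
  by (simp add: unit_param_def)

lemma forward_dir_expand:
  "i < dims K \<Longrightarrow> forward_dir dims W D z K i =
     (\<Sum>k\<in>{1..K}. \<Sum>i'<dims k. \<Sum>j<dims (k-1). D k i' j * forward_dir dims W (unit_param k i' j) z K i)"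
proof (induction K arbitrary: i)
  case (Suc K)
  define F where "F k = (\<Sum>i'<dims k. \<Sum>j<dims (k-1). D k i' j * forward_dir dims W (unit_param k i' j) z (Suc K) i)" for k
  have "F (Suc K) = (\<Sum>i'<dims (Suc K). \<Sum>j<dims K. (if i' = i then D (Suc K) i j * forward dims W z K j else 0))"
    unfolding F_def
    by (intro sum.cong refl) (auto simp del: forward_dir.simps simp: forward_dir_unit_param_top)
  also have "\<dots> = (\<Sum>i'<dims (Suc K). (if i' = i then (\<Sum>j<dims K. D (Suc K) i j * forward dims W z K j) else 0))"
    by (intro sum.cong refl) auto
  finally have top: "F (Suc K) = (\<Sum>j<dims K. D (Suc K) i j * forward dims W z K j)"
    using Suc.prems by simp
  have "(\<Sum>k\<in>{1..K}. F k) = (\<Sum>k\<in>{1..K}. \<Sum>i'<dims k. \<Sum>j<dims (k-1). \<Sum>m<dims K.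
           W (Suc K) i m * (D k i' j * forward_dir dims W (unit_param k i' j) z K m))"
    unfolding F_def
    by (intro sum.cong refl)
      (simp del: forward_dir.simps add: forward_dir_unit_param_lower sum_distrib_left mult.left_commute)
  also have "\<dots> = (\<Sum>m<dims K. W (Suc K) i m * (\<Sum>k\<in>{1..K}. \<Sum>i'<dims k. \<Sum>j<dims (k-1).
           D k i' j * forward_dir dims W (unit_param k i' j) z K m))"
    by (simp add: sum_distrib_left sum.swap[of _ "{..<dims K}"])
  also have "\<dots> = (\<Sum>m<dims K. W (Suc K) i m * forward_dir dims W D z K m)"
    using Suc.IH by simp
  finally have lower: "(\<Sum>k\<in>{1..K}. F k) = (\<Sum>m<dims K. W (Suc K) i m * forward_dir dims W D z K m)" .
  have "(\<Sum>k\<in>{1..Suc K}. F k) = (\<Sum>k\<in>{1..K}. F k) + F (Suc K)"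
    by (simp add: sum.cl_ivl_Suc)
  also have "\<dots> = forward_dir dims W D z (Suc K) i"
    unfolding lower top by (simp add: sum.distrib)
  finally show ?case
    unfolding F_def by simp
qed simp

definition signed_sample :: "(nat \<Rightarrow> real) \<Rightarrow> (nat \<Rightarrow> nat \<Rightarrow> real) \<Rightarrow> nat \<Rightarrow> nat \<Rightarrow> real" where
  "signed_sample y x a = (\<lambda>j. y a * x a j)"

definition param_sum :: "(nat \<Rightarrow> nat) \<Rightarrow> nat \<Rightarrow> params \<Rightarrow> real" where
  "param_sum dims L f = (\<Sum>k\<in>{1..L}. \<Sum>i<dims k. \<Sum>j<dims (k-1). f k i j)"

lemma param_sum_nonneg: "(\<And>k i j. 0 \<le> f k i j) \<Longrightarrow> 0 \<le> param_sum dims L f"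
  unfolding param_sum_def by (intro sum_nonneg) auto

definition risk_dir :: "(real \<Rightarrow> real) \<Rightarrow> nat \<Rightarrow> (nat \<Rightarrow> nat \<Rightarrow> real) \<Rightarrow> (nat \<Rightarrow> real)
    \<Rightarrow> (nat \<Rightarrow> nat) \<Rightarrow> nat \<Rightarrow> params \<Rightarrow> params \<Rightarrow> real" where
  "risk_dir loss' n x y dims L W D = (1 / real n) *
     (\<Sum>a<n. loss' (forward dims W (signed_sample y x a) L 0) * forward_dir dims W D (signed_sample y x a) L 0)"

lemma risk_eq_forward:
  "dims L = 1 \<Longrightarrow>
    risk loss n x y dims L W = (1 / real n) * (\<Sum>a<n. loss (forward dims W (signed_sample y x a) L 0))"
  unfolding risk_def wprod_def signed_sample_def
  using prodW_forward[of 0 dims L W] by (simp add: mult.assoc)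

section \<open>Norm estimates\<close>

lemma L2_set_squared: "(L2_set v A)\<^sup>2 = (\<Sum>i\<in>A. (v i)\<^sup>2)"
  by (simp add: L2_set_def sum_nonneg)

lemma abs_le_L2_set_lessThan: "0 < (a::nat) \<Longrightarrow> \<bar>v 0\<bar> \<le> L2_set v {..<a}"
proof -
  assume "0 < a"
  then have "\<bar>v 0\<bar> \<le> L2_set (\<lambda>i. \<bar>v i\<bar>) {..<a}"
    by (intro member_le_L2_set) auto
  then show ?thesis
    by (simp add: L2_set_def)
qed

lemma frob_squared: "(frob dims W k)\<^sup>2 = (\<Sum>i<dims k. \<Sum>j<dims (k-1). (W k i j)\<^sup>2)"
  by (simp add: frob_def sum_nonneg)

lemma frob_nonneg [simp]: "0 \<le> frob dims W k"
  by (simp add: frob_def sum_nonneg)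

lemma frob_uminus [simp]: "frob dims (\<lambda>k i j. - W k i j) k = frob dims W k"
  by (simp add: frob_def)

lemma frob_param_shift_le: "frob dims (param_shift W s D) k \<le> frob dims W k + \<bar>s\<bar> * frob dims D k"
proof -
  have flat: "frob dims V k = L2_set (\<lambda>p. V k (fst p) (snd p)) ({..<dims k} \<times> {..<dims (k-1)})" for V
    unfolding frob_def L2_set_def by (simp add: sum.cartesian_product case_prod_beta)
  have scale: "L2_set (\<lambda>p. s * D k (fst p) (snd p)) A = \<bar>s\<bar> * L2_set (\<lambda>p. D k (fst p) (snd p)) A" for A
  proof -
    have "L2_set (\<lambda>p. s * D k (fst p) (snd p)) A = L2_set (\<lambda>p. \<bar>s\<bar> * D k (fst p) (snd p)) A"
      unfolding L2_set_def by (simp add: power_mult_distrib)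
    then show ?thesis
      by (simp add: L2_set_right_distrib)
  qed
  show ?thesis
    unfolding flat param_shift_def
    using L2_set_triangle_ineq[of "\<lambda>p. W k (fst p) (snd p)" "\<lambda>p. s * D k (fst p) (snd p)"] scale
    by simp
qed

lemma L2_set_matvec_le:
  "L2_set (\<lambda>i. \<Sum>m<dims k. W (Suc k) i m * v m) {..<dims (Suc k)} \<le> frob dims W (Suc k) * L2_set v {..<dims k}"
proof (rule power2_le_imp_le)
  have "(L2_set (\<lambda>i. \<Sum>m<dims k. W (Suc k) i m * v m) {..<dims (Suc k)})\<^sup>2
      = (\<Sum>i<dims (Suc k). (\<Sum>m<dims k. W (Suc k) i m * v m)\<^sup>2)"
    by (simp add: L2_set_squared)
  also have "\<dots> \<le> (\<Sum>i<dims (Suc k). (\<Sum>m<dims k. (W (Suc k) i m)\<^sup>2) * (\<Sum>m<dims k. (v m)\<^sup>2))"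
    by (intro sum_mono Cauchy_Schwarz_ineq_sum)
  also have "\<dots> = (frob dims W (Suc k) * L2_set v {..<dims k})\<^sup>2"
    by (simp add: power_mult_distrib frob_squared L2_set_squared sum_distrib_right)
  finally show "(L2_set (\<lambda>i. \<Sum>m<dims k. W (Suc k) i m * v m) {..<dims (Suc k)})\<^sup>2
      \<le> (frob dims W (Suc k) * L2_set v {..<dims k})\<^sup>2" .
qed simp

definition frob_sum :: "(nat \<Rightarrow> nat) \<Rightarrow> params \<Rightarrow> nat \<Rightarrow> real" where
  "frob_sum dims D K = (\<Sum>k\<in>{1..K}. frob dims D k)"

lemma frob_sum_nonneg [simp]: "0 \<le> frob_sum dims D K"
  by (simp add: frob_sum_def sum_nonneg)

lemma frob_sum_Suc: "frob_sum dims D (Suc K) = frob_sum dims D K + frob dims D (Suc K)"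
  by (simp add: frob_sum_def sum.cl_ivl_Suc)

lemma frob_sum_0 [simp]: "frob_sum dims D 0 = 0"
  by (simp add: frob_sum_def)

lemma frob_sum_squared_le: "(frob_sum dims D L)\<^sup>2 \<le> real L * param_sum dims L (\<lambda>k i j. (D k i j)\<^sup>2)"
  using Cauchy_Schwarz_ineq_sum[of "\<lambda>_. 1" "frob dims D" "{1..L}"]
  by (simp add: frob_sum_def param_sum_def frob_squared)

lemma L2_forward_le:
  assumes "\<And>k. 1 \<le> k \<Longrightarrow> k \<le> K \<Longrightarrow> frob dims W k \<le> R"
  shows "L2_set (forward dims W z K) {..<dims K} \<le> R ^ K * L2_set z {..<dims 0}"
  using assms
proof (induction K)
  case (Suc K)
  have R: "frob dims W (Suc K) \<le> R"
    using Suc.prems by auto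
  have "L2_set (forward dims W z (Suc K)) {..<dims (Suc K)} \<le> frob dims W (Suc K) * L2_set (forward dims W z K) {..<dims K}"
    using L2_set_matvec_le by simp
  also have "\<dots> \<le> R * (R ^ K * L2_set z {..<dims 0})"
    using R Suc order_trans[OF frob_nonneg R] by (intro mult_mono) auto
  finally show ?case by simp
qed simp

lemma L2_forward_dir_le:
  assumes "\<And>k. 1 \<le> k \<Longrightarrow> k \<le> K \<Longrightarrow> frob dims W k \<le> R" "1 \<le> R"
  shows "L2_set (forward_dir dims W D z K) {..<dims K} \<le> frob_sum dims D K * R ^ (K-1) * L2_set z {..<dims 0}"
  using assms
proof (induction K)
  case (Suc K)
  let ?z = "L2_set z {..<dims 0}"
  have R: "frob dims W (Suc K) \<le> R"
    using Suc.prems by auto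
  have IH: "L2_set (forward_dir dims W D z K) {..<dims K} \<le> frob_sum dims D K * R ^ (K-1) * ?z"
    using Suc by auto
  have fwd: "L2_set (forward dims W z K) {..<dims K} \<le> R ^ K * ?z"
    by (rule L2_forward_le) (use Suc.prems in auto)
  have "L2_set (forward_dir dims W D z (Suc K)) {..<dims (Suc K)}
      \<le> L2_set (\<lambda>i. \<Sum>m<dims K. D (Suc K) i m * forward dims W z K m) {..<dims (Suc K)}
        + L2_set (\<lambda>i. \<Sum>m<dims K. W (Suc K) i m * forward_dir dims W D z K m) {..<dims (Suc K)}"
    using L2_set_triangle_ineq[of "\<lambda>i. \<Sum>m<dims K. D (Suc K) i m * forward dims W z K m"
       "\<lambda>i. \<Sum>m<dims K. W (Suc K) i m * forward_dir dims W D z K m"]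
    by (simp add: sum.distrib)
  also have "\<dots> \<le> frob dims D (Suc K) * L2_set (forward dims W z K) {..<dims K}
      + frob dims W (Suc K) * L2_set (forward_dir dims W D z K) {..<dims K}"
    by (intro add_mono L2_set_matvec_le)
  also have "\<dots> \<le> frob dims D (Suc K) * (R ^ K * ?z) + R * (frob_sum dims D K * R ^ (K-1) * ?z)"
    using R IH fwd order_trans[OF frob_nonneg R] by (intro add_mono mult_mono) auto
  also have "\<dots> = frob_sum dims D (Suc K) * R ^ (Suc K - 1) * ?z"
    by (cases K) (simp_all add: frob_sum_Suc algebra_simps)
  finally show ?case .
qed (simp add: L2_set_def)

lemma L2_forward_dir2_le:
  assumes "\<And>k. 1 \<le> k \<Longrightarrow> k \<le> K \<Longrightarrow> frob dims W k \<le> R" "1 \<le> R"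
  shows "L2_set (forward_dir2 dims W D z K) {..<dims K} \<le> (frob_sum dims D K)\<^sup>2 * R ^ (K-1) * L2_set z {..<dims 0}"
  using assms
proof (induction K)
  case (Suc K)
  let ?z = "L2_set z {..<dims 0}" and ?S = "frob_sum dims D K"
  have R: "frob dims W (Suc K) \<le> R"
    using Suc.prems by auto
  have IH: "L2_set (forward_dir2 dims W D z K) {..<dims K} \<le> ?S\<^sup>2 * R ^ (K-1) * ?z"
    using Suc by auto
  have dir: "L2_set (forward_dir dims W D z K) {..<dims K} \<le> ?S * R ^ (K-1) * ?z"
    by (rule L2_forward_dir_le) (use Suc.prems in auto)
  have split: "forward_dir2 dims W D z (Suc K) = (\<lambda>i. 2 * (\<Sum>m<dims K. D (Suc K) i m * forward_dir dims W D z K m)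
       + (\<Sum>m<dims K. W (Suc K) i m * forward_dir2 dims W D z K m))"
    by (simp add: sum.distrib sum_distrib_left mult.assoc)
  have "L2_set (forward_dir2 dims W D z (Suc K)) {..<dims (Suc K)}
      \<le> L2_set (\<lambda>i. 2 * (\<Sum>m<dims K. D (Suc K) i m * forward_dir dims W D z K m)) {..<dims (Suc K)}
        + L2_set (\<lambda>i. \<Sum>m<dims K. W (Suc K) i m * forward_dir2 dims W D z K m) {..<dims (Suc K)}"
    unfolding split by (rule L2_set_triangle_ineq)
  also have "\<dots> \<le> 2 * (frob dims D (Suc K) * L2_set (forward_dir dims W D z K) {..<dims K})
      + frob dims W (Suc K) * L2_set (forward_dir2 dims W D z K) {..<dims K}"
    by (intro add_mono L2_set_matvec_le) (auto simp: L2_set_right_distrib[symmetric] intro: L2_set_matvec_le)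
  also have "\<dots> \<le> 2 * (frob dims D (Suc K) * (?S * R ^ (K-1) * ?z)) + R * (?S\<^sup>2 * R ^ (K-1) * ?z)"
    using R IH dir order_trans[OF frob_nonneg R] by (intro add_mono mult_mono mult_left_mono) auto
  also have "\<dots> \<le> 2 * (frob dims D (Suc K) * (?S * R ^ K * ?z)) + ?S\<^sup>2 * R ^ K * ?z"
  proof (cases K)
    case (Suc K')
    have "R ^ K' * (?z * (?S * frob dims D (Suc K))) \<le> (R * R ^ K') * (?z * (?S * frob dims D (Suc K)))"
      using Suc.prems(2) by (intro mult_right_mono) (auto simp: mult_le_cancel_right1)
    then show ?thesis
      using Suc by (auto simp: mult_ac)
  qed simp
  also have "\<dots> \<le> (frob_sum dims D (Suc K))\<^sup>2 * R ^ (Suc K - 1) * ?z"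
    using Suc.prems(2) by (simp add: frob_sum_Suc power2_eq_square algebra_simps)
  finally show ?case .
qed (simp add: L2_set_def)

lemma frob_squared_le_param_sum:
  assumes "1 \<le> k" "k \<le> L"
  shows "(frob dims V k)\<^sup>2 \<le> param_sum dims L (\<lambda>k i j. (V k i j)\<^sup>2)"
  unfolding param_sum_def frob_squared using assms
  by (intro member_le_sum[where f = "\<lambda>k. \<Sum>i<dims k. \<Sum>j<dims (k-1). (V k i j)\<^sup>2"]) (auto intro!: sum_nonneg)

lemma param_sum_inner_le:
  assumes "0 < c"
  shows "- 2 * param_sum dims L (\<lambda>k i j. D k i j * g k i j)
    \<le> c * param_sum dims L (\<lambda>k i j. (D k i j)\<^sup>2) + param_sum dims L (\<lambda>k i j. (g k i j)\<^sup>2) / c"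
proof -
  have pointwise: "- 2 * (a * b) \<le> c * a\<^sup>2 + b\<^sup>2 / c" for a b :: real
  proof -
    have "0 \<le> (c * a + b)\<^sup>2 / c"
      using assms by simp
    also have "\<dots> = c * a\<^sup>2 + 2 * (a * b) + b\<^sup>2 / c"
      using assms by (simp add: power2_eq_square field_simps)
    finally show ?thesis
      by simp
  qed
  have "- 2 * param_sum dims L (\<lambda>k i j. D k i j * g k i j) = param_sum dims L (\<lambda>k i j. - 2 * (D k i j * g k i j))"
    unfolding param_sum_def by (simp add: sum_distrib_left)
  also have "\<dots> \<le> param_sum dims L (\<lambda>k i j. c * (D k i j)\<^sup>2 + (g k i j)\<^sup>2 / c)"
    unfolding param_sum_def by (intro sum_mono pointwise)
  also have "\<dots> = c * param_sum dims L (\<lambda>k i j. (D k i j)\<^sup>2) + param_sum dims L (\<lambda>k i j. (g k i j)\<^sup>2) / c"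
    unfolding param_sum_def by (simp add: sum.distrib sum_distrib_left sum_divide_distrib)
  finally show ?thesis .
qed

lemma abs_mean_le:
  assumes "\<And>a. a < n \<Longrightarrow> \<bar>f a\<bar> \<le> B" "0 \<le> B"
  shows "\<bar>(1 / real n) * (\<Sum>a<n. f a)\<bar> \<le> B"
proof (cases "n = 0")
  case False
  have "\<bar>(1 / real n) * (\<Sum>a<n. f a)\<bar> \<le> (1 / real n) * (\<Sum>a<n. \<bar>f a\<bar>)"
    by (simp add: abs_mult sum_abs divide_right_mono del: abs_mult)
  also have "\<dots> \<le> (1 / real n) * (\<Sum>a<n. B)"
    using assms by (intro mult_left_mono sum_mono) auto
  finally show ?thesis
    using False by simp
qed (use assms in simp)

lemma abs_diff_le_of_derivative_bound:
  fixes f f' :: "real \<Rightarrow> real"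
  assumes "0 \<le> b" and "\<And>s. 0 \<le> s \<Longrightarrow> s \<le> b \<Longrightarrow> (f has_real_derivative f' s) (at s)"
    and "\<And>s. 0 \<le> s \<Longrightarrow> s \<le> b \<Longrightarrow> \<bar>f' s\<bar> \<le> B"
  shows "\<bar>f b - f 0\<bar> \<le> B * b"
  using field_differentiable_bound[of "{0..b}" f f' B b 0] assms
  by (auto intro: has_field_derivative_at_within)

lemma summable_of_descent:
  fixes R \<eta> N :: "nat \<Rightarrow> real"
  assumes descent: "\<And>t. R (Suc t) \<le> R t - \<eta> t / 2 * N t"
    and "\<And>t. 0 \<le> R t" and "\<And>t. 0 \<le> \<eta> t * N t"
  shows "summable (\<lambda>t. \<eta> t * N t)"
proof (rule summableI_nonneg_bounded)
  have bound: "(\<Sum>t<T. \<eta> t * N t) \<le> 2 * (R 0 - R T)" for T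
  proof (induction T)
    case (Suc T)
    then show ?case
      using descent[of T] by simp
  qed simp
  show "(\<Sum>t<T. \<eta> t * N t) \<le> 2 * R 0" for T
    using bound[of T] assms(2)[of T] by (simp add: algebra_simps)
qed (use assms(3) in simp)

lemma summable_restrict_of_lower_bound:
  fixes \<eta> N :: "nat \<Rightarrow> real"
  assumes "summable (\<lambda>t. \<eta> t * N t)" and "\<And>t. 0 \<le> \<eta> t" and "\<And>t. 0 \<le> N t" and "0 < c"
    and lower: "\<And>t. t\<^sub>0 \<le> t \<Longrightarrow> P t \<Longrightarrow> c \<le> N t"
  shows "summable (\<lambda>t. if P t then \<eta> t else 0)"
proof (rule summable_comparison_test)
  show "summable (\<lambda>t. \<eta> t * N t / c)"
    using assms(1) by (rule summable_divide)
  have "\<bar>if P t then \<eta> t else 0\<bar> \<le> \<eta> t * N t / c" if "t\<^sub>0 \<le> t" for t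
  proof (cases "P t")
    case True
    then have "\<eta> t * c \<le> \<eta> t * N t"
      using lower[OF that] assms(2) by (intro mult_left_mono)
    then show ?thesis
      using True assms(2,4) by (simp add: le_divide_eq)
  next
    case False
    then show ?thesis
      using assms(2,3,4) by simp
  qed
  then show "\<exists>T. \<forall>t\<ge>T. norm (if P t then \<eta> t else 0) \<le> \<eta> t * N t / c"
    unfolding real_norm_def by blast
qed

lemma bdd_above_radii:
  fixes a Rad :: "nat \<Rightarrow> real"
  assumes keep: "\<And>t. a (Suc t) \<le> Rad t - 1 \<Longrightarrow> Rad (Suc t) = Rad t" and bound: "\<And>t. a t \<le> M"
  shows "bdd_above (range Rad)"
proof (cases "\<exists>t0. M + 1 \<le> Rad t0")
  case True
  then obtain t0 where t0: "M + 1 \<le> Rad t0"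
    by blast
  have const: "Rad (t0 + d) = Rad t0" for d
  proof (induction d)
    case (Suc d)
    then show ?case
      using keep[of "t0 + d"] bound[of "Suc (t0 + d)"] t0 by simp
  qed simp
  have "Rad t \<in> Rad ` {..t0}" for t
  proof (cases "t \<le> t0")
    case False
    then obtain d where "t = t0 + d"
      using le_Suc_ex[of t0 t] by auto
    then show ?thesis
      using const by auto
  qed auto
  then have "range Rad \<subseteq> Rad ` {..t0}"
    by auto
  then show ?thesis
    by (meson bdd_above_mono bdd_above_finite finite_atMost finite_imageI)
next
  case False
  then show ?thesis
    by (intro bdd_aboveI[of _ "M + 1"]) (auto simp: not_le less_imp_le)
qed

lemma filterlim_sum_at_top_of_not_summable:
  fixes f :: "nat \<Rightarrow> real"
  assumes nonneg: "\<And>t. 0 \<le> f t" and "\<not> summable f"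
  shows "filterlim (\<lambda>N. \<Sum>t<N. f t) at_top sequentially"
  unfolding filterlim_at_top
proof
  fix Z :: real
  obtain N where N: "Z \<le> (\<Sum>t<N. f t)"
  proof (rule ccontr)
    assume "\<not> thesis"
    then have "(\<Sum>t<N. f t) \<le> Z" for N
      using that \<open>\<not> thesis\<close> by (meson nle_le order.trans)
    with nonneg have "summable f"
      by (rule summableI_nonneg_bounded)
    with \<open>\<not> summable f\<close> show False ..
  qed
  have "(\<Sum>t<N. f t) \<le> (\<Sum>t<T. f t)" if "N \<le> T" for T
    using that nonneg by (intro sum_mono2) auto
  with N show "\<forall>\<^sub>F T in sequentially. Z \<le> (\<Sum>t<T. f t)"
    unfolding eventually_sequentially by (meson order_trans)
qed

lemma continuous_negative_bounded_away:
  fixes f :: "real \<Rightarrow> real"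
  assumes "continuous_on UNIV f" and "\<And>s. f s < 0"
  obtains m where "0 < m" and "\<And>s. \<bar>s\<bar> \<le> B \<Longrightarrow> f s \<le> - m"
proof (cases "0 \<le> B")
  case True
  have "continuous_on {-B..B} f"
    using assms(1) by (rule continuous_on_subset) simp
  then obtain s0 where "\<forall>s\<in>{-B..B}. f s \<le> f s0"
    using continuous_attains_sup[of "{-B..B}" f] True by auto
  then show ?thesis
    using that[of "- f s0"] assms(2) by (auto simp: abs_le_iff)
next
  case False
  then show ?thesis
    using that[of 1] by simp
qed

lemma separable_margin:
  fixes z :: "nat \<Rightarrow> nat \<Rightarrow> real"
  assumes "0 < n" and sep: "\<forall>a<n. 0 < (\<Sum>j<d. u j * z a j)"
  obtains \<gamma> where "0 < \<gamma>" "\<And>a. a < n \<Longrightarrow> \<gamma> \<le> (\<Sum>j<d. u j * z a j)" "0 < (\<Sum>j<d. (u j)\<^sup>2)"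
proof
  show "0 < Min ((\<lambda>a. \<Sum>j<d. u j * z a j) ` {..<n})"
    using assms by (subst Min_gr_iff) auto
  show "Min ((\<lambda>a. \<Sum>j<d. u j * z a j) ` {..<n}) \<le> (\<Sum>j<d. u j * z a j)" if "a < n" for a
    using that by (intro Min_le) auto
  show "0 < (\<Sum>j<d. (u j)\<^sup>2)"
  proof (rule ccontr)
    assume "\<not> 0 < (\<Sum>j<d. (u j)\<^sup>2)"
    then have "\<forall>j\<in>{..<d}. (u j)\<^sup>2 = 0"
      using sum_nonneg_eq_0_iff[of "{..<d}" "\<lambda>j. (u j)\<^sup>2"] sum_nonneg[of "{..<d}" "\<lambda>j. (u j)\<^sup>2"] by simp
    then show False
      using sep \<open>0 < n\<close> by auto
  qed
qed

lemma inBall_iff_maxfrob_le: "1 \<le> L \<Longrightarrow> inBall dims L W r \<longleftrightarrow> maxfrob dims L W \<le> r"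
  unfolding inBall_def maxfrob_def by (subst Max_le_iff) auto

lemma frob_le_maxfrob: "1 \<le> k \<Longrightarrow> k \<le> L \<Longrightarrow> frob dims W k \<le> maxfrob dims L W"
  unfolding maxfrob_def by (intro Max_ge) auto

lemma betaR_mono:
  assumes "0 \<le> b + G" and "0 \<le> R" and "R \<le> R'"
  shows "betaR L b G R \<le> betaR L b G R'"
  unfolding betaR_def using assms by (intro mult_right_mono mult_left_mono power_mono) auto

section \<open>Smoothness of the risk\<close>

locale linear_net =
  fixes n L :: nat and dims :: "nat \<Rightarrow> nat"
    and x :: "nat \<Rightarrow> nat \<Rightarrow> real" and y :: "nat \<Rightarrow> real"
    and loss loss' :: "real \<Rightarrow> real" and \<beta> G :: real
  assumes L_pos: "1 \<le> L" and dims_L: "dims L = 1"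
    and sample_norm_le: "\<And>a. a < n \<Longrightarrow> L2_set (signed_sample y x a) {..<dims 0} \<le> 1"
    and loss_deriv: "\<And>s. (loss has_real_derivative loss' s) (at s)"
    and loss'_lipschitz: "\<And>a b. \<bar>loss' a - loss' b\<bar> \<le> \<beta> * \<bar>a - b\<bar>"
    and loss'_bounded: "\<And>a. \<bar>loss' a\<bar> \<le> G"
begin

abbreviation "Risk \<equiv> risk loss n x y dims L"
abbreviation "grad \<equiv> gradP Risk"
abbreviation "dRisk \<equiv> risk_dir loss' n x y dims L"
abbreviation "grad_norm_sq W \<equiv> param_sum dims L (\<lambda>k i j. (grad W k i j)\<^sup>2)"

lemma G_nonneg: "0 \<le> G"
  using loss'_bounded[of 0] by linarith

lemma beta_nonneg: "0 \<le> \<beta>"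
  using loss'_lipschitz[of 1 0] by simp

lemma grad_norm_sq_nonneg: "0 \<le> grad_norm_sq W"
  by (rule param_sum_nonneg) simp

lemma risk_has_derivative_along:
  "((\<lambda>s. Risk (param_shift W s D)) has_real_derivative dRisk (param_shift W s D) D) (at s)"
  unfolding risk_eq_forward[of dims L, OF dims_L] risk_dir_def
  by (intro DERIV_cmult DERIV_sum DERIV_chain2[where f = loss, OF loss_deriv forward_has_derivative])

lemma grad_eq_risk_dir: "grad W k i j = dRisk W (unit_param k i j)"
  unfolding gradP_def perturb_eq_param_shift
  using risk_has_derivative_along[of W "unit_param k i j" 0] DERIV_imp_deriv by fastforce

lemma risk_dir_eq_param_sum: "dRisk W D = param_sum dims L (\<lambda>k i j. D k i j * grad W k i j)"
proof -
  let ?z = "signed_sample y x" and ?u = unit_param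
  have "dRisk W D = (\<Sum>a<n. \<Sum>k\<in>{1..L}. \<Sum>i<dims k. \<Sum>j<dims (k-1).
      D k i j * ((1 / real n) * (loss' (forward dims W (?z a) L 0) * forward_dir dims W (?u k i j) (?z a) L 0)))"
    unfolding risk_dir_def using forward_dir_expand[of 0 dims L W D] dims_L
    by (simp del: forward_dir.simps add: sum_distrib_left mult_ac)
  also have "\<dots> = (\<Sum>k\<in>{1..L}. \<Sum>i<dims k. \<Sum>j<dims (k-1). \<Sum>a<n.
      D k i j * ((1 / real n) * (loss' (forward dims W (?z a) L 0) * forward_dir dims W (?u k i j) (?z a) L 0)))"
    by (simp only: sum.swap[of _ "{..<n}"])
  also have "\<dots> = param_sum dims L (\<lambda>k i j. D k i j * dRisk W (?u k i j))"
    unfolding param_sum_def risk_dir_def by (simp add: sum_distrib_left)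
  finally show ?thesis
    by (simp add: grad_eq_risk_dir)
qed

lemma
  assumes ball: "\<And>k. 1 \<le> k \<Longrightarrow> k \<le> L \<Longrightarrow> frob dims W k \<le> R" and "1 \<le> R" and "a < n"
  shows abs_output_le: "\<bar>forward dims W (signed_sample y x a) L 0\<bar> \<le> R ^ L"
    and abs_output_dir_le:
      "\<bar>forward_dir dims W D (signed_sample y x a) L 0\<bar> \<le> frob_sum dims D L * R ^ (L-1)"
    and abs_output_dir2_le:
      "\<bar>forward_dir2 dims W D (signed_sample y x a) L 0\<bar> \<le> (frob_sum dims D L)\<^sup>2 * R ^ (L-1)"
proof -
  let ?z = "signed_sample y x a"
  have out: "\<bar>v 0\<bar> \<le> c * L2_set ?z {..<dims 0}" if "L2_set v {..<dims L} \<le> c * L2_set ?z {..<dims 0}" for v c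
    using abs_le_L2_set_lessThan[of "dims L" v] dims_L that by simp
  have "c * L2_set ?z {..<dims 0} \<le> c" if "0 \<le> c" for c
    using sample_norm_le[OF \<open>a < n\<close>] that by (simp add: mult_left_le)
  with out show "\<bar>forward dims W ?z L 0\<bar> \<le> R ^ L"
    and "\<bar>forward_dir dims W D ?z L 0\<bar> \<le> frob_sum dims D L * R ^ (L-1)"
    and "\<bar>forward_dir2 dims W D ?z L 0\<bar> \<le> (frob_sum dims D L)\<^sup>2 * R ^ (L-1)"
    using L2_forward_le[OF ball] L2_forward_dir_le[OF ball] L2_forward_dir2_le[OF ball] \<open>1 \<le> R\<close>
    by (meson order_trans frob_sum_nonneg zero_le_power zero_le_one mult_nonneg_nonneg zero_le_power2)+
qed

lemma risk_dir_abs_le: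
  assumes "\<And>k. 1 \<le> k \<Longrightarrow> k \<le> L \<Longrightarrow> frob dims W k \<le> R" "1 \<le> R"
  shows "\<bar>dRisk W D\<bar> \<le> G * frob_sum dims D L * R ^ (L-1)"
  unfolding risk_dir_def
proof (rule abs_mean_le)
  fix a assume "a < n"
  then show "\<bar>loss' (forward dims W (signed_sample y x a) L 0) * forward_dir dims W D (signed_sample y x a) L 0\<bar>
      \<le> G * frob_sum dims D L * R ^ (L-1)"
    unfolding abs_mult mult.assoc
    by (intro mult_mono abs_output_dir_le) (use assms loss'_bounded G_nonneg in auto)
qed (use G_nonneg assms(2) in simp)

lemma frob_grad_le:
  assumes "\<And>k. 1 \<le> k \<Longrightarrow> k \<le> L \<Longrightarrow> frob dims W k \<le> R" "1 \<le> R" "1 \<le> k" "k \<le> L"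
  shows "frob dims (grad W) k \<le> G * R ^ (L-1)"
proof -
  define D where "D = (\<lambda>k' i j. if k' = k then grad W k' i j else 0)"
  have "dRisk W D = param_sum dims L (\<lambda>k' i j. D k' i j * grad W k' i j)"
    by (rule risk_dir_eq_param_sum)
  also have "\<dots> = (\<Sum>k'\<in>{1..L}. if k' = k then (frob dims (grad W) k)\<^sup>2 else 0)"
    unfolding param_sum_def D_def frob_squared by (intro sum.cong refl) (simp add: power2_eq_square)
  finally have "dRisk W D = (frob dims (grad W) k)\<^sup>2"
    using assms(3,4) by simp
  moreover have "frob_sum dims D L = (\<Sum>k'\<in>{1..L}. if k' = k then frob dims (grad W) k else 0)"
    unfolding frob_sum_def D_def by (intro sum.cong refl) (simp add: frob_def)
  then have "frob_sum dims D L = frob dims (grad W) k"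
    using assms(3,4) by simp
  ultimately have "frob dims (grad W) k * frob dims (grad W) k \<le> (G * R ^ (L-1)) * frob dims (grad W) k"
    using risk_dir_abs_le[OF assms(1,2), of D] by (simp add: power2_eq_square mult_ac)
  then show ?thesis
    using G_nonneg assms(2) frob_nonneg[of dims "grad W" k]
    by (metis less_eq_real_def mult_le_cancel_right zero_le_mult_iff zero_le_power order_trans zero_le_one)
qed

lemma sample_term_lipschitz:
  assumes segment: "\<And>s k. 0 \<le> s \<Longrightarrow> s \<le> \<xi> \<Longrightarrow> 1 \<le> k \<Longrightarrow> k \<le> L \<Longrightarrow> frob dims (param_shift W s D) k \<le> R"
    and "1 \<le> R" and "0 \<le> \<xi>" and "a < n"
  defines "p s \<equiv> forward dims (param_shift W s D) (signed_sample y x a) L 0"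
    and "q s \<equiv> forward_dir dims (param_shift W s D) D (signed_sample y x a) L 0"
  shows "\<bar>loss' (p \<xi>) * q \<xi> - loss' (p 0) * q 0\<bar> \<le> \<xi> * (frob_sum dims D L)\<^sup>2 * ((\<beta> + G) * R ^ (2*L-2))"
proof -
  let ?S = "frob_sum dims D L" and ?P = "R ^ (L-1)"
  have P1: "1 \<le> ?P"
    using \<open>1 \<le> R\<close> by simp
  have "(L-1) + (L-1) = 2*L-2"
    by simp
  then have PP: "?P * ?P = R ^ (2*L-2)"
    by (metis power_add)
  have q_le: "\<bar>q s\<bar> \<le> ?S * ?P" if "0 \<le> s" "s \<le> \<xi>" for s
    unfolding q_def using segment that \<open>1 \<le> R\<close> \<open>a < n\<close> by (intro abs_output_dir_le) auto
  have dp: "\<bar>p \<xi> - p 0\<bar> \<le> ?S * ?P * \<xi>"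
    unfolding p_def using \<open>0 \<le> \<xi>\<close> q_le forward_has_derivative unfolding q_def
    by (intro abs_diff_le_of_derivative_bound[where f' = "\<lambda>s. forward_dir dims (param_shift W s D) D (signed_sample y x a) L 0"])
  have q'_le: "\<bar>forward_dir2 dims (param_shift W s D) D (signed_sample y x a) L 0\<bar> \<le> ?S\<^sup>2 * ?P"
    if "0 \<le> s" "s \<le> \<xi>" for s
    using segment that \<open>1 \<le> R\<close> \<open>a < n\<close> by (intro abs_output_dir2_le) auto
  have dq: "\<bar>q \<xi> - q 0\<bar> \<le> ?S\<^sup>2 * ?P * \<xi>"
    unfolding q_def using \<open>0 \<le> \<xi>\<close> q'_le forward_dir_has_derivative
    by (intro abs_diff_le_of_derivative_bound[where f' = "\<lambda>s. forward_dir2 dims (param_shift W s D) D (signed_sample y x a) L 0"])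
  have "loss' (p \<xi>) * q \<xi> - loss' (p 0) * q 0 = (loss' (p \<xi>) - loss' (p 0)) * q \<xi> + loss' (p 0) * (q \<xi> - q 0)"
    by (simp add: algebra_simps)
  then have "\<bar>loss' (p \<xi>) * q \<xi> - loss' (p 0) * q 0\<bar>
      \<le> \<bar>loss' (p \<xi>) - loss' (p 0)\<bar> * \<bar>q \<xi>\<bar> + \<bar>loss' (p 0)\<bar> * \<bar>q \<xi> - q 0\<bar>"
    by (simp add: abs_mult[symmetric] abs_triangle_ineq)
  also have "\<dots> \<le> (\<beta> * (?S * ?P * \<xi>)) * (?S * ?P) + G * (?S\<^sup>2 * ?P * \<xi>)"
  proof (intro add_mono mult_mono)
    show "\<bar>loss' (p \<xi>) - loss' (p 0)\<bar> \<le> \<beta> * (?S * ?P * \<xi>)"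
      using loss'_lipschitz dp beta_nonneg by (meson mult_left_mono order_trans)
  qed (use q_le dq loss'_bounded G_nonneg beta_nonneg P1 \<open>0 \<le> \<xi>\<close> in auto)
  also have "\<dots> = \<xi> * ?S\<^sup>2 * (\<beta> * (?P * ?P) + G * ?P)"
    by (simp add: power2_eq_square algebra_simps)
  also have "\<dots> \<le> \<xi> * ?S\<^sup>2 * ((\<beta> + G) * R ^ (2*L-2))"
  proof -
    have "?P * 1 \<le> ?P * ?P"
      using P1 by (intro mult_left_mono) auto
    then have "G * ?P \<le> G * (?P * ?P)"
      using G_nonneg by (intro mult_left_mono) auto
    then show ?thesis
      using \<open>0 \<le> \<xi>\<close> unfolding PP[symmetric] by (intro mult_left_mono) (auto simp: algebra_simps)
  qed
  finally show ?thesis .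
qed

lemma risk_dir_lipschitz:
  assumes "\<And>s k. 0 \<le> s \<Longrightarrow> s \<le> \<xi> \<Longrightarrow> 1 \<le> k \<Longrightarrow> k \<le> L \<Longrightarrow> frob dims (param_shift W s D) k \<le> R"
    and "1 \<le> R" and "0 \<le> \<xi>"
  shows "\<bar>dRisk (param_shift W \<xi> D) D - dRisk W D\<bar> \<le> \<xi> * (frob_sum dims D L)\<^sup>2 * ((\<beta> + G) * R ^ (2*L-2))"
proof -
  let ?p = "\<lambda>s a. forward dims (param_shift W s D) (signed_sample y x a) L 0"
    and ?q = "\<lambda>s a. forward_dir dims (param_shift W s D) D (signed_sample y x a) L 0"
  have "dRisk (param_shift W \<xi> D) D - dRisk W D
      = (1 / real n) * (\<Sum>a<n. loss' (?p \<xi> a) * ?q \<xi> a - loss' (?p 0 a) * ?q 0 a)"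
    unfolding risk_dir_def by (simp add: sum_subtractf right_diff_distrib)
  moreover have "\<bar>(1 / real n) * (\<Sum>a<n. loss' (?p \<xi> a) * ?q \<xi> a - loss' (?p 0 a) * ?q 0 a)\<bar>
      \<le> \<xi> * (frob_sum dims D L)\<^sup>2 * ((\<beta> + G) * R ^ (2*L-2))"
  proof (rule abs_mean_le)
    show "0 \<le> \<xi> * (frob_sum dims D L)\<^sup>2 * ((\<beta> + G) * R ^ (2*L-2))"
      using assms(2,3) G_nonneg beta_nonneg by simp
  qed (rule sample_term_lipschitz[OF assms])
  ultimately show ?thesis
    by simp
qed

lemma step_size_small:
  assumes "1 \<le> R" and "0 \<le> \<eta>" and "\<eta> \<le> 1 / betaR L \<beta> G R"
  shows "\<eta> * (real L * ((\<beta> + G) * R ^ (2*L-2))) \<le> 1 / 2"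
proof -
  let ?X = "(\<beta> + G) * R ^ (2*L-2)"
  have "real L * 1 \<le> real L * real L"
    using L_pos by (intro mult_left_mono) auto
  then have "real L * ?X \<le> real L * real L * ?X"
    using beta_nonneg G_nonneg \<open>1 \<le> R\<close> by (intro mult_right_mono) auto
  also have "\<dots> = betaR L \<beta> G R / 2"
    unfolding betaR_def by (simp add: power2_eq_square)
  finally have "\<eta> * (real L * ?X) \<le> \<eta> * (betaR L \<beta> G R / 2)"
    using \<open>0 \<le> \<eta>\<close> by (intro mult_left_mono) auto
  moreover have "\<eta> * betaR L \<beta> G R \<le> 1"
  proof (cases "0 < betaR L \<beta> G R")
    case True
    then show ?thesis
      using assms(3) by (simp add: le_divide_eq mult.commute)
  qed (use \<open>0 \<le> \<eta>\<close> mult_nonneg_nonpos[of \<eta> "betaR L \<beta> G R"] in linarith)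
  ultimately show ?thesis
    by simp
qed

lemma gradient_step_in_ball:
  assumes ball: "\<And>k. 1 \<le> k \<Longrightarrow> k \<le> L \<Longrightarrow> frob dims W k \<le> R - 1" and "1 \<le> R"
    and small: "\<eta> * (real L * ((\<beta> + G) * R ^ (2*L-2))) \<le> 1 / 2"
    and "0 \<le> s" "s \<le> \<eta>" "1 \<le> k" "k \<le> L"
  shows "frob dims (param_shift W s (\<lambda>k i j. - grad W k i j)) k \<le> R"
proof -
  let ?X = "(\<beta> + G) * R ^ (2*L-2)"
  have "frob dims (grad W) k \<le> G * R ^ (L-1)"
    using ball \<open>1 \<le> R\<close> assms(6,7) by (intro frob_grad_le) force+
  also have "\<dots> \<le> ?X"
    using \<open>1 \<le> R\<close> beta_nonneg G_nonneg by (intro mult_mono power_increasing) auto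
  also have "\<dots> \<le> real L * ?X"
    using mult_right_mono[of 1 "real L" ?X] L_pos beta_nonneg G_nonneg \<open>1 \<le> R\<close> by simp
  finally have "s * frob dims (grad W) k \<le> \<eta> * (real L * ?X)"
    using assms(4,5) by (intro mult_mono) auto
  then show ?thesis
    using frob_param_shift_le[of dims W s "\<lambda>k i j. - grad W k i j" k] ball[OF assms(6,7)] assms(4) small
    by simp
qed

lemma risk_descent:
  assumes ball: "\<And>k. 1 \<le> k \<Longrightarrow> k \<le> L \<Longrightarrow> frob dims W k \<le> R - 1" and "1 \<le> R"
    and "0 \<le> \<eta>" and "\<eta> \<le> 1 / betaR L \<beta> G R"
  shows "Risk (param_shift W \<eta> (\<lambda>k i j. - grad W k i j)) \<le> Risk W - \<eta> / 2 * grad_norm_sq W"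
proof (cases "\<eta> = 0")
  case False
  let ?D = "\<lambda>k i j. - grad W k i j" and ?N = "grad_norm_sq W" and ?X = "(\<beta> + G) * R ^ (2*L-2)"
  have "0 < \<eta>"
    using False \<open>0 \<le> \<eta>\<close> by simp
  have small: "\<eta> * (real L * ?X) \<le> 1 / 2"
    using assms(2-4) by (rule step_size_small)
  obtain \<xi> where \<xi>: "0 < \<xi>" "\<xi> < \<eta>"
    "Risk (param_shift W \<eta> ?D) - Risk (param_shift W 0 ?D) = (\<eta> - 0) * dRisk (param_shift W \<xi> ?D) ?D"
    using MVT2[OF \<open>0 < \<eta>\<close> risk_has_derivative_along] by blast
  have "\<bar>dRisk (param_shift W \<xi> ?D) ?D - dRisk W ?D\<bar> \<le> \<xi> * (frob_sum dims ?D L)\<^sup>2 * ?X"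
    using gradient_step_in_ball[OF ball \<open>1 \<le> R\<close> small] \<xi>(1,2) \<open>1 \<le> R\<close>
    by (intro risk_dir_lipschitz) auto
  also have "\<dots> \<le> \<eta> * (real L * ?N) * ?X"
    using frob_sum_squared_le[of dims ?D L] \<xi>(1,2) beta_nonneg G_nonneg \<open>1 \<le> R\<close>
    by (intro mult_right_mono mult_mono) auto
  also have "\<dots> \<le> ?N / 2"
    using mult_right_mono[OF small grad_norm_sq_nonneg[of W]] by (simp add: mult_ac)
  moreover have "dRisk W ?D = - ?N"
    by (simp add: risk_dir_eq_param_sum param_sum_def power2_eq_square sum_negf)
  ultimately have "dRisk (param_shift W \<xi> ?D) ?D \<le> - ?N / 2"
    by linarith
  then show ?thesis
    using \<xi>(3) mult_left_mono[of _ _ \<eta>] \<open>0 < \<eta>\<close> by fastforce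
qed simp

section \<open>A lower bound on the gradient\<close>

text \<open>\<open>output_row V\<close> is the row vector \<open>W\<^sub>L \<cdots> W\<^sub>2\<close>: the gradient of the network output
  with respect to the first hidden layer.\<close>

definition output_row :: "params \<Rightarrow> nat \<Rightarrow> real" where
  "output_row V i = forward (\<lambda>k. dims (Suc k)) (\<lambda>k. V (Suc k)) (unit_vec i) (L-1) 0"

definition first_layer_dir :: "params \<Rightarrow> (nat \<Rightarrow> real) \<Rightarrow> params" where
  "first_layer_dir V u = (\<lambda>k i j. if k = 1 then output_row V i * u j else 0)"

lemma forward_through_hidden:
  "forward (\<lambda>k. dims (Suc k)) (\<lambda>k. V (Suc k)) h (L-1) 0 = (\<Sum>i<dims 1. h i * output_row V i)"
proof -
  have "0 < (\<lambda>k. dims (Suc k)) (L-1)"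
    using dims_L L_pos by simp
  from forward_linear[where dims="\<lambda>k. dims (Suc k)" and W="\<lambda>k. V (Suc k)" and v=h, OF this] show ?thesis
    unfolding output_row_def One_nat_def by simp
qed

lemma forward_output_eq: "forward dims V z L 0 = (\<Sum>i<dims 1. forward dims V z 1 i * output_row V i)"
  using forward_Suc_eq_shifted[of dims V z "L-1"] forward_through_hidden L_pos by simp

lemma forward_dir_first_layer_dir:
  "forward_dir dims V (first_layer_dir V u) z L 0
     = (\<Sum>j<dims 0. u j * z j) * (\<Sum>i<dims 1. (output_row V i)\<^sup>2)"
proof -
  have "forward_dir dims V (first_layer_dir V u) z L 0
      = (\<Sum>i<dims 1. ((\<Sum>j<dims 0. u j * z j) * output_row V i) * output_row V i)"
    using forward_dir_Suc_eq_shifted[of "first_layer_dir V u" dims V z "L-1"] forward_through_hidden L_pos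
    by (simp add: first_layer_dir_def sum_distrib_left mult_ac)
  then show ?thesis
    by (simp add: sum_distrib_left power2_eq_square mult_ac)
qed

lemma param_sum_first_layer_dir:
  "param_sum dims L (\<lambda>k i j. (first_layer_dir V u k i j)\<^sup>2)
     = (\<Sum>i<dims 1. (output_row V i)\<^sup>2) * (\<Sum>j<dims 0. (u j)\<^sup>2)"
proof -
  have "param_sum dims L (\<lambda>k i j. (first_layer_dir V u k i j)\<^sup>2)
      = (\<Sum>k\<in>{1..L}. if k = 1 then (\<Sum>i<dims 1. \<Sum>j<dims 0. (output_row V i * u j)\<^sup>2) else 0)"
    unfolding param_sum_def first_layer_dir_def by (intro sum.cong refl) auto
  then show ?thesis
    using L_pos by (simp add: power_mult_distrib sum_product)
qed

lemma output_row_norm_lower: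
  assumes "1 \<le> r" and ball: "\<And>k. 1 \<le> k \<Longrightarrow> k \<le> L \<Longrightarrow> frob dims V k \<le> r"
    and "0 \<le> \<delta>" "a < n" "\<delta> \<le> forward dims V (signed_sample y x a) L 0"
  shows "(\<delta> / r)\<^sup>2 \<le> (\<Sum>i<dims 1. (output_row V i)\<^sup>2)"
proof -
  let ?h = "forward dims V (signed_sample y x a) 1" and ?C = "\<Sum>i<dims 1. (output_row V i)\<^sup>2"
  have "L2_set ?h {..<dims 1} \<le> r ^ 1 * L2_set (signed_sample y x a) {..<dims 0}"
    using ball L_pos by (intro L2_forward_le) auto
  also have "\<dots> \<le> r"
    using sample_norm_le[OF \<open>a < n\<close>] \<open>1 \<le> r\<close> by (simp add: mult_left_le)
  finally have h: "(\<Sum>i<dims 1. (?h i)\<^sup>2) \<le> r\<^sup>2"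
    by (metis L2_set_squared L2_set_nonneg power_mono)
  have "\<delta>\<^sup>2 \<le> (forward dims V (signed_sample y x a) L 0)\<^sup>2"
    using assms(3,5) by (intro power_mono) auto
  also have "\<dots> \<le> (\<Sum>i<dims 1. (?h i)\<^sup>2) * ?C"
    unfolding forward_output_eq by (rule Cauchy_Schwarz_ineq_sum)
  also have "\<dots> \<le> r\<^sup>2 * ?C"
    using h by (rule mult_right_mono) (simp add: sum_nonneg)
  finally show ?thesis
    using \<open>1 \<le> r\<close> by (simp add: power_divide divide_le_eq mult.commute)
qed

lemma risk_dir_first_layer_dir_le:
  assumes "0 < m" "0 < \<gamma>" "0 < n"
    and margin: "\<And>a. a < n \<Longrightarrow> \<gamma> \<le> (\<Sum>j<dims 0. u j * signed_sample y x a j)"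
    and slope: "\<And>a. a < n \<Longrightarrow> loss' (forward dims V (signed_sample y x a) L 0) \<le> - m"
  shows "dRisk V (first_layer_dir V u) \<le> - (m * \<gamma>) * (\<Sum>i<dims 1. (output_row V i)\<^sup>2)"
proof -
  let ?z = "signed_sample y x" and ?C = "\<Sum>i<dims 1. (output_row V i)\<^sup>2"
  have "dRisk V (first_layer_dir V u) \<le> (1 / real n) * (\<Sum>a<n. - (m * \<gamma>) * ?C)"
    unfolding risk_dir_def forward_dir_first_layer_dir
  proof (intro mult_left_mono sum_mono)
    fix a assume "a \<in> {..<n}"
    then have "loss' (forward dims V (?z a) L 0) * (\<Sum>j<dims 0. u j * ?z a j) \<le> (- m) * (\<Sum>j<dims 0. u j * ?z a j)"
      using slope margin \<open>0 < \<gamma>\<close> by (intro mult_right_mono) (auto intro: order_trans[of 0 \<gamma>])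
    also have "\<dots> \<le> (- m) * \<gamma>"
      using margin \<open>a \<in> {..<n}\<close> \<open>0 < m\<close> by simp
    finally have "loss' (forward dims V (?z a) L 0) * (\<Sum>j<dims 0. u j * ?z a j) * ?C \<le> (- m) * \<gamma> * ?C"
      by (intro mult_right_mono) (simp_all add: sum_nonneg)
    then show "loss' (forward dims V (?z a) L 0) * ((\<Sum>j<dims 0. u j * ?z a j) * ?C) \<le> - (m * \<gamma>) * ?C"
      by (simp add: mult.assoc)
  qed simp
  also have "\<dots> = - (m * \<gamma>) * ?C"
    using \<open>0 < n\<close> by simp
  finally show ?thesis .
qed

text \<open>Moving the first layer along \<open>c u\<^sup>T\<close>, with \<open>c = output_row V\<close>, raises every output
  \<open>z\<^sub>a\<close> at rate \<open>\<langle>u, z\<^sub>a\<rangle> |c|\<^sup>2 \<ge> \<gamma> |c|\<^sup>2\<close>, and \<open>|c| \<ge> \<delta> / r\<close> because some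
  output reaches \<open>\<delta>\<close>; AM-GM against the gradient turns this into a lower bound on it.\<close>

lemma grad_norm_sq_lower:
  fixes V :: params and u :: "nat \<Rightarrow> real"
  assumes "1 \<le> r" and ball: "\<And>k. 1 \<le> k \<Longrightarrow> k \<le> L \<Longrightarrow> frob dims V k \<le> r"
    and "0 < m" "0 < \<gamma>" "0 < \<delta>"
    and margin: "\<And>a. a < n \<Longrightarrow> \<gamma> \<le> (\<Sum>j<dims 0. u j * signed_sample y x a j)"
    and "a0 < n" and large_output: "\<delta> \<le> forward dims V (signed_sample y x a0) L 0"
    and slope: "\<And>a. a < n \<Longrightarrow> loss' (forward dims V (signed_sample y x a) L 0) \<le> - m"
    and "0 < (\<Sum>j<dims 0. (u j)\<^sup>2)"
  shows "(m * \<gamma>)\<^sup>2 * (\<delta> / r)\<^sup>2 / (\<Sum>j<dims 0. (u j)\<^sup>2) \<le> grad_norm_sq V"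
proof -
  let ?N = "grad_norm_sq V" and ?D = "first_layer_dir V u"
  define U where "U = (\<Sum>j<dims 0. (u j)\<^sup>2)"
  define C where "C = (\<Sum>i<dims 1. (output_row V i)\<^sup>2)"
  define \<mu> where "\<mu> = m * \<gamma> / U"
  have "0 < \<mu>" and \<mu>_CU: "\<mu> * (C * U) = m * \<gamma> * C"
    using assms(3,4,10) unfolding \<mu>_def U_def by auto
  then have "- 2 * dRisk V ?D \<le> m * \<gamma> * C + ?N / \<mu>"
    using param_sum_inner_le[of \<mu> dims L ?D "grad V"]
    unfolding param_sum_first_layer_dir risk_dir_eq_param_sum C_def[symmetric] U_def[symmetric] \<mu>_CU
    by simp
  moreover have "dRisk V ?D \<le> - (m * \<gamma>) * C"
    unfolding C_def using assms(3,4,6,7,9) by (intro risk_dir_first_layer_dir_le) auto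
  ultimately have "m * \<gamma> * C \<le> ?N / \<mu>"
    by simp
  then have "\<mu> * (m * \<gamma> * C) \<le> ?N"
    using \<open>0 < \<mu>\<close> by (simp add: le_divide_eq mult.commute)
  moreover have "(m * \<gamma>)\<^sup>2 * C / U = \<mu> * (m * \<gamma> * C)"
    unfolding \<mu>_def by (simp add: power2_eq_square)
  moreover have "(m * \<gamma>)\<^sup>2 * (\<delta> / r)\<^sup>2 / U \<le> (m * \<gamma>)\<^sup>2 * C / U"
    using output_row_norm_lower[OF assms(1,2) _ assms(7,8)] assms(5,10)
    unfolding U_def C_def by (intro divide_right_mono mult_left_mono) auto
  ultimately show ?thesis
    unfolding U_def by linarith
qed

end

section \<open>The gradient descent iterates\<close>

locale gd_run = linear_net +
  fixes W :: "nat \<Rightarrow> params" and \<eta> Rad :: "nat \<Rightarrow> real"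
  assumes loss'_cont: "continuous_on UNIV loss'"
    and loss'_neg: "\<And>s. loss' s < 0"
    and loss_top: "(loss \<longlongrightarrow> 0) at_top"
    and separable: "\<exists>u. \<forall>a<n. 0 < (\<Sum>j<dims 0. u j * signed_sample y x a j)"
    and gd_step: "\<And>t k i j. W (Suc t) k i j = W t k i j - \<eta> t * gradP (risk loss n x y dims L) (W t) k i j"
    and init_grad: "\<exists>k\<in>{1..L}. \<exists>i<dims k. \<exists>j<dims (k - 1). gradP (risk loss n x y dims L) (W 0) k i j \<noteq> 0"
    and init_risk: "risk loss n x y dims L (W 0) \<le> loss 0"
    and step_size: "\<And>t. \<eta> t = min (1 / betaR L \<beta> G (Rad t)) 1"
    and radii: "\<And>t. inBall dims L (W t) (Rad t - 1)"
    and radii_keep: "\<And>t. inBall dims L (W (Suc t)) (Rad t - 1) \<Longrightarrow> Rad (Suc t) = Rad t"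
begin

lemma W_Suc: "W (Suc t) = param_shift (W t) (\<eta> t) (\<lambda>k i j. - grad (W t) k i j)"
  using gd_step by (simp add: param_shift_def fun_eq_iff)

lemma frob_le_Rad: "1 \<le> k \<Longrightarrow> k \<le> L \<Longrightarrow> frob dims (W t) k \<le> Rad t - 1"
  using radii[of t] by (auto simp: inBall_def)

lemma Rad_ge_1: "1 \<le> Rad t"
  using frob_le_Rad[of 1 t] frob_nonneg[of dims "W t" 1] L_pos by linarith

lemma betaR_pos: "1 \<le> R \<Longrightarrow> 0 < betaR L \<beta> G R"
proof -
  assume "1 \<le> R"
  have "0 < G"
    using loss'_bounded[of 0] loss'_neg[of 0] by linarith
  then show ?thesis
    unfolding betaR_def using beta_nonneg L_pos \<open>1 \<le> R\<close> by simp
qed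

lemma step_pos: "0 < \<eta> t"
  using step_size betaR_pos[OF Rad_ge_1[of t]] by simp

lemma risk_step_le: "Risk (W (Suc t)) \<le> Risk (W t) - \<eta> t / 2 * grad_norm_sq (W t)"
  unfolding W_Suc using frob_le_Rad Rad_ge_1 step_size step_pos[of t]
  by (intro risk_descent) (auto simp: less_imp_le)

lemma loss_antimono: "a \<le> b \<Longrightarrow> loss b \<le> loss a"
  using DERIV_nonpos_imp_nonincreasing[of a b loss] loss_deriv loss'_neg by (meson less_imp_le)

lemma loss_nonneg: "0 \<le> loss s"
  using loss_top by (rule tendsto_upperbound) (auto intro: eventually_ge_at_top[THEN eventually_mono] loss_antimono)

lemma risk_nonneg: "0 \<le> Risk V"
  unfolding risk_eq_forward[of dims L, OF dims_L] by (simp add: loss_nonneg sum_nonneg)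

lemma summable_step_grad: "summable (\<lambda>t. \<eta> t * grad_norm_sq (W t))"
  using risk_step_le risk_nonneg step_pos grad_norm_sq_nonneg
  by (intro summable_of_descent[where R = "\<lambda>t. Risk (W t)"]) (auto simp: less_imp_le)

lemma risk_le_risk_W1: "1 \<le> t \<Longrightarrow> Risk (W t) \<le> Risk (W 1)"
proof (induction t rule: dec_induct)
  case (step t)
  have "0 \<le> \<eta> t / 2 * grad_norm_sq (W t)"
    using step_pos[of t] grad_norm_sq_nonneg[of "W t"] by simp
  then show ?case
    using risk_step_le[of t] step.IH by linarith
qed simp

lemma risk_W1_less_loss_0: "Risk (W 1) < loss 0"
proof -
  obtain k i j where kij: "k \<in> {1..L}" "i < dims k" "j < dims (k-1)" "grad (W 0) k i j \<noteq> 0"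
    using init_grad by blast
  have "(grad (W 0) k i j)\<^sup>2 \<le> (\<Sum>j<dims (k-1). (grad (W 0) k i j)\<^sup>2)"
    using kij by (intro member_le_sum) auto
  also have "\<dots> \<le> (frob dims (grad (W 0)) k)\<^sup>2"
    unfolding frob_squared using kij
    by (intro member_le_sum[where f = "\<lambda>i. \<Sum>j<dims (k-1). (grad (W 0) k i j)\<^sup>2"]) (auto intro: sum_nonneg)
  also have "\<dots> \<le> grad_norm_sq (W 0)"
    using kij by (intro frob_squared_le_param_sum) auto
  finally have "0 < \<eta> 0 / 2 * grad_norm_sq (W 0)"
    using kij step_pos[of 0] by (smt (verit) zero_less_power2 divide_pos_pos mult_pos_pos)
  then show ?thesis
    using risk_step_le[of 0] init_risk by simp
qed

lemma n_pos: "0 < n"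
  using init_grad unfolding gradP_def risk_def by (cases n) auto

lemma exists_large_output:
  assumes "1 \<le> t" and "Risk (W 1) < loss \<delta>"
  shows "\<exists>a<n. \<delta> \<le> forward dims (W t) (signed_sample y x a) L 0"
proof (rule ccontr)
  assume "\<not> ?thesis"
  then have "loss \<delta> \<le> loss (forward dims (W t) (signed_sample y x a) L 0)" if "a < n" for a
    using that by (intro loss_antimono) auto
  then have "(1 / real n) * (\<Sum>a<n. loss \<delta>) \<le> Risk (W t)"
    unfolding risk_eq_forward[of dims L, OF dims_L] by (intro mult_left_mono sum_mono) auto
  then show False
    using n_pos risk_le_risk_W1[OF \<open>1 \<le> t\<close>] assms(2) by simp
qed

lemma exists_loss_above_risk_W1: obtains \<delta> where "0 < \<delta>" "Risk (W 1) < loss \<delta>"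
proof -
  have "(loss \<longlongrightarrow> loss 0) (at_right 0)"
    using DERIV_isCont[OF loss_deriv] by (simp add: isCont_def filterlim_at_split)
  then have "\<forall>\<^sub>F s in at_right 0. Risk (W 1) < loss s"
    using risk_W1_less_loss_0 by (rule order_tendstoD(1))
  then obtain b where "0 < b" "\<forall>s>0. s < b \<longrightarrow> Risk (W 1) < loss s"
    by (auto simp: eventually_at_right_field)
  then show ?thesis
    using that[of "b / 2"] by simp
qed

lemma grad_norm_sq_bounded_below_in_ball:
  obtains c where "0 < c" "\<And>t. 1 \<le> t \<Longrightarrow> inBall dims L (W t) r \<Longrightarrow> c \<le> grad_norm_sq (W t)"
proof -
  define r1 where "r1 = max r 1"
  obtain u where u: "\<forall>a<n. 0 < (\<Sum>j<dims 0. u j * signed_sample y x a j)"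
    using separable by blast
  obtain \<gamma> where \<gamma>: "0 < \<gamma>" "\<And>a. a < n \<Longrightarrow> \<gamma> \<le> (\<Sum>j<dims 0. u j * signed_sample y x a j)"
    and U: "0 < (\<Sum>j<dims 0. (u j)\<^sup>2)"
    using separable_margin[OF n_pos u] by blast
  obtain m where m: "0 < m" "\<And>s. \<bar>s\<bar> \<le> r1 ^ L \<Longrightarrow> loss' s \<le> - m"
    using continuous_negative_bounded_away[OF loss'_cont loss'_neg] by blast
  obtain \<delta> where \<delta>: "0 < \<delta>" "Risk (W 1) < loss \<delta>"
    by (rule exists_loss_above_risk_W1)
  show thesis
  proof (rule that)
    show "0 < (m * \<gamma>)\<^sup>2 * (\<delta> / r1)\<^sup>2 / (\<Sum>j<dims 0. (u j)\<^sup>2)"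
      using m(1) \<gamma>(1) \<delta>(1) U unfolding r1_def by simp
    fix t assume "1 \<le> t" "inBall dims L (W t) r"
    then have ball: "frob dims (W t) k \<le> r1" if "1 \<le> k" "k \<le> L" for k
      using that unfolding inBall_def r1_def by force
    obtain a0 where "a0 < n" "\<delta> \<le> forward dims (W t) (signed_sample y x a0) L 0"
      using exists_large_output[OF \<open>1 \<le> t\<close> \<delta>(2)] by blast
    moreover have "loss' (forward dims (W t) (signed_sample y x a) L 0) \<le> - m" if "a < n" for a
      using m(2) abs_output_le[OF ball _ that] unfolding r1_def by simp
    ultimately show "(m * \<gamma>)\<^sup>2 * (\<delta> / r1)\<^sup>2 / (\<Sum>j<dims 0. (u j)\<^sup>2) \<le> grad_norm_sq (W t)"
      using ball m(1) \<gamma> \<delta>(1) U by (intro grad_norm_sq_lower) (auto simp: r1_def)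
  qed
qed

lemma summable_steps_in_ball: "summable (\<lambda>t. if inBall dims L (W t) r then \<eta> t else 0)"
proof -
  obtain c where "0 < c" "\<And>t. 1 \<le> t \<Longrightarrow> inBall dims L (W t) r \<Longrightarrow> c \<le> grad_norm_sq (W t)"
    using grad_norm_sq_bounded_below_in_ball[where r = r] by blast
  then show ?thesis
    using summable_step_grad step_pos grad_norm_sq_nonneg
    by (intro summable_restrict_of_lower_bound[where t\<^sub>0 = 1]) (auto simp: less_imp_le)
qed

lemma weights_unbounded: "\<not> bdd_above (range (\<lambda>t. maxfrob dims L (W t)))"
proof
  assume "bdd_above (range (\<lambda>t. maxfrob dims L (W t)))"
  then obtain M where M: "\<And>t. maxfrob dims L (W t) \<le> M"
    by (auto simp: bdd_above_def)
  have "bdd_above (range Rad)"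
    using radii_keep M
    by (intro bdd_above_radii[where a = "\<lambda>t. maxfrob dims L (W t)"]) (auto simp: inBall_iff_maxfrob_le[OF L_pos])
  then obtain B where B: "\<And>t. Rad t \<le> B"
    by (auto simp: bdd_above_def)
  have "0 < betaR L \<beta> G B"
    using B[of 0] Rad_ge_1[of 0] by (intro betaR_pos) simp
  have step_lower: "min (1 / betaR L \<beta> G B) 1 \<le> \<eta> t" for t
  proof -
    have "betaR L \<beta> G (Rad t) \<le> betaR L \<beta> G B"
      using B[of t] Rad_ge_1[of t] beta_nonneg G_nonneg by (intro betaR_mono) auto
    then have "1 / betaR L \<beta> G B \<le> 1 / betaR L \<beta> G (Rad t)"
      using betaR_pos[OF Rad_ge_1[of t]] by (intro divide_left_mono) auto
    then show ?thesis
      using step_size[of t] by auto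
  qed
  have "summable \<eta>"
    using summable_steps_in_ball[of "max M 1"] M by (simp add: inBall_iff_maxfrob_le[OF L_pos] le_max_iff_disj)
  then have "\<forall>\<^sub>F t in sequentially. \<eta> t < min (1 / betaR L \<beta> G B) 1"
    using \<open>0 < betaR L \<beta> G B\<close> by (intro order_tendstoD(2)[OF summable_LIMSEQ_zero]) auto
  then obtain t where "\<eta> t < min (1 / betaR L \<beta> G B) 1"
    by (auto simp: eventually_sequentially)
  with step_lower[of t] show False
    by simp
qed

lemma frob_W_le:
  assumes "1 \<le> k" "k \<le> L"
  shows "frob dims (W t) k \<le> frob dims (W 0) k + (\<Sum>s<t. \<eta> s * sqrt (grad_norm_sq (W s)))"
proof (induction t)
  case (Suc t)
  have "frob dims (grad (W t)) k \<le> sqrt (grad_norm_sq (W t))"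
    using frob_squared_le_param_sum[OF assms] by (simp add: real_le_rsqrt)
  then have "\<bar>\<eta> t\<bar> * frob dims (\<lambda>k i j. - grad (W t) k i j) k \<le> \<eta> t * sqrt (grad_norm_sq (W t))"
    using step_pos[of t] by (simp add: mult_left_mono)
  then have "frob dims (W (Suc t)) k \<le> frob dims (W t) k + \<eta> t * sqrt (grad_norm_sq (W t))"
    using frob_param_shift_le[of dims "W t" "\<eta> t" "\<lambda>k i j. - grad (W t) k i j" k]
    unfolding W_Suc by linarith
  then show ?case
    using Suc.IH by simp
qed simp

lemma steps_not_summable: "\<not> summable \<eta>"
proof
  assume "summable \<eta>"
  let ?g = "\<lambda>t. \<eta> t * sqrt (grad_norm_sq (W t))"
  have nonneg: "0 \<le> ?g t" for t
    using step_pos[of t] grad_norm_sq_nonneg[of "W t"] by simp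
  have bound: "norm (?g t) \<le> (\<eta> t + \<eta> t * grad_norm_sq (W t)) / 2" for t
  proof -
    have "2 * sqrt (grad_norm_sq (W t)) \<le> 1 + grad_norm_sq (W t)"
      using sum_squares_bound[of 1 "sqrt (grad_norm_sq (W t))"] grad_norm_sq_nonneg by simp
    then have "\<eta> t * (2 * sqrt (grad_norm_sq (W t))) \<le> \<eta> t * (1 + grad_norm_sq (W t))"
      using step_pos[of t] by (intro mult_left_mono) auto
    then show ?thesis
      using nonneg[of t] by (simp add: algebra_simps)
  qed
  have "summable (\<lambda>t. (\<eta> t + \<eta> t * grad_norm_sq (W t)) / 2)"
    using \<open>summable \<eta>\<close> summable_step_grad by (intro summable_divide summable_add)
  then have "summable ?g"
    using bound by (rule summable_comparison_test')
  then have partial: "(\<Sum>s<t. ?g s) \<le> (\<Sum>s. ?g s)" for t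
    using nonneg by (intro sum_le_suminf) auto
  have "frob dims (W t) k \<le> maxfrob dims L (W 0) + (\<Sum>s. ?g s)" if "k \<in> {1..L}" for t k
    using frob_W_le[of k t] frob_le_maxfrob[of k L dims "W 0"] partial[of t] that by simp
  then have "maxfrob dims L (W t) \<le> maxfrob dims L (W 0) + (\<Sum>s. ?g s)" for t
    using L_pos unfolding maxfrob_def by (subst Max_le_iff) auto
  then have "bdd_above (range (\<lambda>t. maxfrob dims L (W t)))"
    by (rule bdd_aboveI2)
  with weights_unbounded show False ..
qed

end

theorem mainTheorem10:
  fixes n L :: nat and dims :: "nat \<Rightarrow> nat"
    and x :: "nat \<Rightarrow> nat \<Rightarrow> real" and y :: "nat \<Rightarrow> real"
    and loss loss' :: "real \<Rightarrow> real" and \<beta> G :: real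
    and W :: "nat \<Rightarrow> params" and \<eta> Rad :: "nat \<Rightarrow> real"
  assumes L: "L \<ge> 1"
    and dims_pos: "\<forall>k\<le>L. dims k \<ge> 1" and dimL: "dims L = 1"
    and xnorm: "\<forall>i<n. sqrt (\<Sum>j<dims 0. (x i j)\<^sup>2) \<le> 1"
    and ylab: "\<forall>i<n. y i \<in> {-1, 1}"
    and separable: "\<exists>u. \<forall>i<n. (\<Sum>j<dims 0. u j * (y i * x i j)) > 0"
    \<comment> \<open>Assumption 1\<close>
    and loss_deriv: "\<forall>s. (loss has_real_derivative loss' s) (at s)"
    and loss'_cont: "continuous_on UNIV loss'"
    and loss'_neg: "\<forall>s. loss' s < 0"
    and loss_bot: "filterlim loss at_top at_bot"
    and loss_top: "(loss \<longlongrightarrow> 0) at_top"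
    \<comment> \<open>gradient descent\<close>
    and GD: "\<forall>t k i j. W (Suc t) k i j
              = W t k i j - \<eta> t * gradP (risk loss n x y dims L) (W t) k i j"
    \<comment> \<open>Assumption 2\<close>
    and init_grad: "\<exists>k\<in>{1..L}. \<exists>i<dims k. \<exists>j<dims (k - 1).
                      gradP (risk loss n x y dims L) (W 0) k i j \<noteq> 0"
    and init_risk: "risk loss n x y dims L (W 0) \<le> loss 0"
    \<comment> \<open>Assumption 4\<close>
    and lip: "\<forall>a b. \<bar>loss' a - loss' b\<bar> \<le> \<beta> * \<bar>a - b\<bar>"
    and bnd: "\<forall>a. \<bar>loss' a\<bar> \<le> G"
    \<comment> \<open>Assumption 5\<close>
    and step: "\<forall>t. \<eta> t = min (1 / betaR L \<beta> G (Rad t)) 1"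
    and radii: "\<forall>t. inBall dims L (W t) (Rad t - 1)"
    and radii_keep: "\<forall>t. inBall dims L (W (Suc t)) (Rad t - 1) \<longrightarrow> Rad (Suc t) = Rad t"
  shows "\<not> bdd_above (range (\<lambda>t. maxfrob dims L (W t)))
     \<and> filterlim (\<lambda>N. \<Sum>t<N. \<eta> t) at_top sequentially
     \<and> (\<forall>r>0. summable (\<lambda>t. if inBall dims L (W t) r then \<eta> t else 0))"
proof -
  have "L2_set (signed_sample y x a) {..<dims 0} \<le> 1" if "a < n" for a
  proof -
    have "(y a)\<^sup>2 = 1"
      using ylab that by auto
    then show ?thesis
      using xnorm that unfolding L2_set_def signed_sample_def by (simp add: power_mult_distrib)
  qed
  then interpret gd_run n L dims x y loss loss' \<beta> G W \<eta> Rad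
    using assms by unfold_locales (auto simp: signed_sample_def)
  have "filterlim (\<lambda>N. \<Sum>t<N. \<eta> t) at_top sequentially"
    using step_pos steps_not_summable by (intro filterlim_sum_at_top_of_not_summable) (auto simp: less_imp_le)
  then show ?thesis
    using weights_unbounded summable_steps_in_ball by simp
qed

end
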